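(* Let $\mathbb{X}$ be a Banach space and $\delta>0$. Suppose $V\subset\mathbb{X}$ is a $\delta$-separated set with $\#V\geq2$ and there exist a line $L$ and a number $0\leq\alpha<1/6$ with $\mathrm{dist}(v,L)\leq\alpha\delta$ for all $v\in V$. Let $\pi$ be a metric projection onto $L$, identify $L$ with $\mathbb{R}$ via an affine isometry, and enumerate $V=\{v_1,\dots,v_n\}$ so that $\pi(v_1)<\pi(v_2)<\dots<\pi(v_n)$. Then $$\sum_{i=1}^{n-1}|v_{i+1}-v_i|^s\leq(1+3\alpha)^{2s}|v_1-v_n|^s\quad\text{for all }s\in[1,\infty).$$
   Context: All Banach spaces are real; a line is a one-dimensional affine subspace. $V$ is $\delta$-separated if $|v-w|\geq\delta$ for all distinct $v,w\in V$. A metric projection onto $L$ is any map $\pi:\mathbb{X}\to L$ with $|x-\pi(x)|=\mathrm{dist}(x,L)$ for all $x$. (Under these hypotheses the points $\pi(v)$, $v\in V$, are distinct.) *)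

theory Defs
  imports "HOL-Analysis.Analysis"
begin

end

theory Submission
  imports Defs
begin

text \<open>
  Let \<open>t x\<close> be the coordinate of the projection of \<open>x\<close> on the line. Every point lies within
  \<open>\<alpha>\<delta>\<close> of the line, so distances in \<open>V\<close> agree with coordinate distances up to \<open>2\<alpha>\<delta>\<close>;
  since distances in \<open>V\<close> are at least \<open>\<delta>\<close>, this additive error can be absorbed
  multiplicatively. Hence each step \<open>|v (i+1) - v i|\<close> is at most \<open>1/(1 - 2\<alpha>)\<close> times its
  coordinate gap, and the sum of the gaps telescopes to at most \<open>(1 + 2\<alpha>) |v 1 - v n|\<close>.
  Superadditivity of \<open>x \<mapsto> x powr s\<close> on \<open>[0,\<infinity>)\<close> finishes the proof, as
  \<open>(1 + 2\<alpha>)/(1 - 2\<alpha>) \<le> (1 + 3\<alpha>)\<^sup>2\<close> for \<open>\<alpha> < 1/6\<close>.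
\<close>

lemma sum_powr_le_powr_sum:
  fixes x :: "'i \<Rightarrow> real"
  assumes "finite I" and nonneg: "\<And>i. i \<in> I \<Longrightarrow> 0 \<le> x i" and "1 \<le> s"
  shows "(\<Sum>i\<in>I. x i powr s) \<le> (\<Sum>i\<in>I. x i) powr s"
proof -
  define S where "S = (\<Sum>i\<in>I. x i)"
  have "0 \<le> S" unfolding S_def using nonneg by (simp add: sum_nonneg)
  have x_le_S: "x i \<le> S" if "i \<in> I" for i
    unfolding S_def using assms that by (intro member_le_sum) auto
  have powr_split: "y powr s = y * y powr (s - 1)" if "0 \<le> y" for y :: real
    using that powr_add[of y 1 "s - 1"] by (cases "y = 0") auto
  have "(\<Sum>i\<in>I. x i powr s) = (\<Sum>i\<in>I. x i * x i powr (s - 1))"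
    using nonneg powr_split by simp
  also have "\<dots> \<le> (\<Sum>i\<in>I. x i * S powr (s - 1))"
    using nonneg x_le_S \<open>1 \<le> s\<close> by (intro sum_mono mult_left_mono powr_mono2) auto
  also have "\<dots> = S powr s"
    using powr_split[OF \<open>0 \<le> S\<close>] by (simp add: S_def sum_distrib_right)
  finally show ?thesis unfolding S_def .
qed

lemma sum_powr_steps_le_powr_telescope:
  fixes d T :: "nat \<Rightarrow> real"
  assumes "m \<le> n" "0 \<le> c" "1 \<le> s"
    and steps: "\<And>i. i \<in> {m..<n} \<Longrightarrow> 0 \<le> d i \<and> d i \<le> c * (T (Suc i) - T i)"
  shows "(\<Sum>i=m..<n. d i powr s) \<le> (c * (T n - T m)) powr s"
proof -
  have "(\<Sum>i=m..<n. d i powr s) \<le> (\<Sum>i=m..<n. (c * (T (Suc i) - T i)) powr s)"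
    using steps \<open>1 \<le> s\<close> by (intro sum_mono powr_mono2) auto
  also have "\<dots> \<le> (\<Sum>i=m..<n. c * (T (Suc i) - T i)) powr s"
    using steps \<open>1 \<le> s\<close> by (intro sum_powr_le_powr_sum) (auto intro: order_trans)
  also have "(\<Sum>i=m..<n. c * (T (Suc i) - T i)) = c * (T n - T m)"
    using sum_Suc_diff'[OF \<open>m \<le> n\<close>, of T] by (simp flip: sum_distrib_left)
  finally show ?thesis .
qed

lemma le_divide_one_minus_of_le_add:
  fixes \<beta> \<delta> d g :: real
  assumes "\<delta> \<le> d" "d \<le> g + \<beta> * \<delta>" "0 \<le> \<beta>" "\<beta> < 1"
  shows "d \<le> g / (1 - \<beta>)"
proof -
  have "\<beta> * \<delta> \<le> \<beta> * d" using assms by (simp add: mult_left_mono)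
  then have "(1 - \<beta>) * d \<le> g" using assms by (simp add: algebra_simps)
  then show ?thesis using assms by (simp add: pos_le_divide_eq mult.commute)
qed

lemma one_plus_div_one_minus_le_square:
  fixes \<alpha> :: real
  assumes "0 \<le> \<alpha>" "\<alpha> < 1/6"
  shows "(1 + 2 * \<alpha>) / (1 - 2 * \<alpha>) \<le> (1 + 3 * \<alpha>)\<^sup>2"
proof -
  have "\<alpha> * \<alpha> \<le> \<alpha> * (1/6)" using assms by (intro mult_left_mono) auto
  then have "\<alpha> * (2 - 3 * \<alpha> - 18 * \<alpha>\<^sup>2) \<ge> 0"
    using assms by (intro mult_nonneg_nonneg) (auto simp: power2_eq_square)
  then have "1 + 2 * \<alpha> \<le> (1 + 3 * \<alpha>)\<^sup>2 * (1 - 2 * \<alpha>)"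
    by (simp add: power2_eq_square algebra_simps)
  then show ?thesis using assms by (simp add: divide_le_eq)
qed

lemma sum_powr_chain_le:
  fixes d T :: "nat \<Rightarrow> real" and \<alpha> \<delta> D s :: real
  assumes "m \<le> n" "0 \<le> \<alpha>" "\<alpha> < 1/6" "0 \<le> \<delta>" "1 \<le> s"
    and steps: "\<And>i. i \<in> {m..<n} \<Longrightarrow> \<delta> \<le> d i \<and> d i \<le> T (Suc i) - T i + 2 * \<alpha> * \<delta>"
    and ends: "\<delta> \<le> D" "T n - T m \<le> D + 2 * \<alpha> * \<delta>"
  shows "(\<Sum>i=m..<n. d i powr s) \<le> (1 + 3 * \<alpha>) powr (2 * s) * D powr s"
proof -
  define c where "c = 1 / (1 - 2 * \<alpha>)"
  have "0 < c" using assms by (simp add: c_def)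
  have step_le: "0 \<le> d i \<and> d i \<le> c * (T (Suc i) - T i)" if "i \<in> {m..<n}" for i
  proof -
    have "\<delta> \<le> d i" "d i \<le> T (Suc i) - T i + 2 * \<alpha> * \<delta>" using steps[OF that] by auto
    then show ?thesis
      using assms le_divide_one_minus_of_le_add[of \<delta> "d i" _ "2 * \<alpha>"] by (simp add: c_def)
  qed
  have "0 \<le> T n - T m"
  proof -
    have "0 \<le> T (Suc i) - T i" if "i \<in> {m..<n}" for i
      using step_le[OF that] \<open>0 < c\<close> by (smt (verit) zero_le_mult_iff)
    then have "0 \<le> (\<Sum>i=m..<n. T (Suc i) - T i)" by (rule sum_nonneg)
    then show ?thesis using sum_Suc_diff'[OF \<open>m \<le> n\<close>, of T] by simp
  qed
  have "(\<Sum>i=m..<n. d i powr s) \<le> (c * (T n - T m)) powr s"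
    using step_le assms \<open>0 < c\<close> by (intro sum_powr_steps_le_powr_telescope) auto
  also have "\<dots> \<le> ((1 + 3 * \<alpha>)\<^sup>2 * D) powr s"
  proof (rule powr_mono2)
    have "T n - T m \<le> (1 + 2 * \<alpha>) * D"
      using ends assms mult_left_mono[of \<delta> D "2 * \<alpha>"] by (simp add: algebra_simps)
    then have "c * (T n - T m) \<le> (1 + 2 * \<alpha>) / (1 - 2 * \<alpha>) * D"
      using assms by (simp add: c_def divide_right_mono)
    also have "\<dots> \<le> (1 + 3 * \<alpha>)\<^sup>2 * D"
      using one_plus_div_one_minus_le_square assms ends by (intro mult_right_mono) auto
    finally show "c * (T n - T m) \<le> (1 + 3 * \<alpha>)\<^sup>2 * D" .
  qed (use assms \<open>0 < c\<close> \<open>0 \<le> T n - T m\<close> in auto)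
  also have "\<dots> = ((1 + 3 * \<alpha>) powr 2) powr s * D powr s"
    using assms by (simp add: powr_mult powr_numeral)
  also have "\<dots> = (1 + 3 * \<alpha>) powr (2 * s) * D powr s"
    by (simp add: powr_powr)
  finally show ?thesis .
qed

lemma norm_diff_near_line:
  fixes x y p e :: "'a::real_normed_vector"
  assumes "norm e = 1" "norm (x - (p + a *\<^sub>R e)) \<le> r" "norm (y - (p + b *\<^sub>R e)) \<le> r"
  shows "\<bar>norm (x - y) - \<bar>a - b\<bar>\<bar> \<le> 2 * r"
proof -
  define u w where "u = p + a *\<^sub>R e" and "w = p + b *\<^sub>R e"
  have "\<bar>a - b\<bar> = norm (u - w)"
    using assms(1) by (simp add: u_def w_def flip: scaleR_diff_left)
  moreover have "\<bar>norm (x - y) - norm (u - w)\<bar> \<le> norm ((x - u) - (y - w))"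
    using norm_triangle_ineq3[of "x - y" "u - w"] by (simp add: algebra_simps)
  moreover have "\<dots> \<le> norm (x - u) + norm (y - w)"
    by (rule norm_triangle_ineq4)
  ultimately show ?thesis using assms(2,3) unfolding u_def w_def by linarith
qed

theorem mainTheorem11:
  fixes V :: "'a::banach set" and \<delta> \<alpha> s :: real and p e :: 'a
    and \<pi> :: "'a \<Rightarrow> 'a" and v :: "nat \<Rightarrow> 'a" and n :: nat
  defines "L \<equiv> range (\<lambda>t::real. p + t *\<^sub>R e)"
  assumes delta_pos: "\<delta> > 0"
    and sep: "\<forall>x\<in>V. \<forall>y\<in>V. x \<noteq> y \<longrightarrow> norm (x - y) \<ge> \<delta>"
    and finV: "finite V" and cardV: "card V \<ge> 2"
    and e_unit: "norm e = 1"
    and alpha: "0 \<le> \<alpha>" "\<alpha> < 1/6"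
    and close: "\<forall>x\<in>V. infdist x L \<le> \<alpha> * \<delta>"
    and proj: "\<forall>x. \<pi> x \<in> L \<and> norm (x - \<pi> x) = infdist x L"
    and n_def: "n = card V"
    and enum: "V = v ` {1..n}"
    and order: "\<forall>i\<in>{1..<n}. \<exists>a b. \<pi> (v i) = p + a *\<^sub>R e \<and> \<pi> (v (i+1)) = p + b *\<^sub>R e \<and> a < b"
    and s: "s \<ge> 1"
  shows "(\<Sum>i=1..<n. norm (v (i+1) - v i) powr s) \<le> ((1 + 3 * \<alpha>) powr (2 * s)) * (norm (v 1 - v n) powr s)"
proof -
  have "\<forall>x. \<exists>a. \<pi> x = p + a *\<^sub>R e" using proj by (auto simp: L_def)
  then obtain t where t: "\<And>x. \<pi> x = p + t x *\<^sub>R e" by metis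
  have near: "norm (x - (p + t x *\<^sub>R e)) \<le> \<alpha> * \<delta>" if "x \<in> V" for x
    using that close proj by (simp flip: t)
  have approx: "\<bar>norm (x - y) - \<bar>t x - t y\<bar>\<bar> \<le> 2 * (\<alpha> * \<delta>)" if "x \<in> V" "y \<in> V" for x y
    using norm_diff_near_line[OF e_unit near[OF that(1)] near[OF that(2)]] .
  have t_step: "t (v i) < t (v (Suc i))" if i: "i \<in> {1..<n}" for i
  proof -
    obtain a b where "\<pi> (v i) = p + a *\<^sub>R e" "\<pi> (v (Suc i)) = p + b *\<^sub>R e" "a < b"
      using order[rule_format, OF i] by auto
    moreover have "e \<noteq> 0" using e_unit by auto
    ultimately show ?thesis by (simp add: t)
  qed
  have "n \<ge> 2" "1 \<le> n" using cardV n_def by simp_all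
  have "inj_on v {1..n}"
    using enum n_def by (intro eq_card_imp_inj_on) auto
  then have "v 1 \<noteq> v n" using \<open>n \<ge> 2\<close> by (auto dest: inj_onD)
  have in_V: "v i \<in> V" if "i \<in> {1..n}" for i using enum that by blast
  have steps: "\<delta> \<le> norm (v (Suc i) - v i) \<and>
      norm (v (Suc i) - v i) \<le> t (v (Suc i)) - t (v i) + 2 * \<alpha> * \<delta>" if i: "i \<in> {1..<n}" for i
  proof -
    have "v (Suc i) \<noteq> v i" "v i \<in> V" "v (Suc i) \<in> V" using t_step[OF i] in_V i by auto
    then show ?thesis using sep approx[of "v (Suc i)" "v i"] t_step[OF i] by auto
  qed
  have "v 1 \<in> V" "v n \<in> V" using in_V \<open>n \<ge> 2\<close> by auto
  then have ends: "\<delta> \<le> norm (v 1 - v n)" "t (v n) - t (v 1) \<le> norm (v 1 - v n) + 2 * \<alpha> * \<delta>"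
    using sep \<open>v 1 \<noteq> v n\<close> approx[of "v 1" "v n"] by (auto simp: norm_minus_commute)
  from sum_powr_chain_le[OF \<open>1 \<le> n\<close> alpha less_imp_le[OF delta_pos] s steps ends]
  show ?thesis by simp
qed

end
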